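(* Let $\beta>0$, $\tilde\sigma\in[0,1)$ and $(\tau,\theta)\in\mathcal R_{\tilde\sigma}$. Define the $2m\times 2m$ matrix $$Q=\begin{bmatrix}(3-3\tau-2\tilde\sigma)\beta I&2(1-\tau-\tilde\sigma)I\\ 2(1-\tau-\tilde\sigma)I&\frac{4-\tau-\theta-2\tilde\sigma}{\beta}I\end{bmatrix}$$ and the scalar $\vartheta=\sqrt{(3-3\tau-2\tilde\sigma)(4-\tau-\theta-2\tilde\sigma)}-2(1-\tau-\tilde\sigma)$. Then $Q$ is symmetric positive definite and $\vartheta>0$. Moreover, for any $(y,\gamma)\in\mathbb{R}^m\times\mathbb{R}^m$, $\|(y,\gamma)\|_Q^2\ge-2\vartheta\langle y,\gamma\rangle$.
   Context: $I$ is the $m\times m$ identity; $\|z\|_Q=\sqrt{\langle Qz,z\rangle}$. $\mathcal R_{\tilde\sigma}:=\{(\tau,\theta):\tau\in(-1,1-\tilde\sigma),\ \tau+\theta>0,\ (1-\tau^2)(2-\tau-\theta-\tilde\sigma)-(1-\theta)^2(1-\tau-\tilde\sigma)>0\}$. *)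

theory Defs
  imports "HOL-Analysis.Analysis"
begin

definition R_region :: "real \<Rightarrow> real \<Rightarrow> real \<Rightarrow> bool" where
  "R_region s tau theta \<longleftrightarrow>
     -1 < tau \<and> tau < 1 - s \<and> tau + theta > 0 \<and>
     (1 - tau^2) * (2 - tau - theta - s) - (1 - theta)^2 * (1 - tau - s) > 0"

text \<open>Vectors in R^(2m) are indexed by the sum type 'm + 'm: Inl i is the i-th
  coordinate of the first block, Inr i the i-th coordinate of the second block.\<close>
definition stack :: "real^'m::finite \<Rightarrow> real^'m \<Rightarrow> real^('m + 'm)" where
  "stack y g = (\<chi> k. case k of Inl i \<Rightarrow> y $ i | Inr i \<Rightarrow> g $ i)"

definition Qmat :: "real \<Rightarrow> real \<Rightarrow> real \<Rightarrow> real \<Rightarrow> real^('m::finite + 'm)^('m + 'm)" where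
  "Qmat beta s tau theta =
     (\<chi> k l.
        (case k of
           Inl i \<Rightarrow> (case l of
               Inl j \<Rightarrow> (if i = j then (3 - 3 * tau - 2 * s) * beta else 0)
             | Inr j \<Rightarrow> (if i = j then 2 * (1 - tau - s) else 0))
         | Inr i \<Rightarrow> (case l of
               Inl j \<Rightarrow> (if i = j then 2 * (1 - tau - s) else 0)
             | Inr j \<Rightarrow> (if i = j then (4 - tau - theta - 2 * s) / beta else 0))))"

definition vartheta :: "real \<Rightarrow> real \<Rightarrow> real \<Rightarrow> real" where
  "vartheta s tau theta =
     sqrt ((3 - 3 * tau - 2 * s) * (4 - tau - theta - 2 * s)) - 2 * (1 - tau - s)"

definition sym_pos_def :: "real^'n^'n \<Rightarrow> bool" where
  "sym_pos_def A \<longleftrightarrow> transpose A = A \<and> (\<forall>x. x \<noteq> 0 \<longrightarrow> x \<bullet> (A *v x) > 0)"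

definition Qnorm_sq :: "real^'n^'n \<Rightarrow> real^'n \<Rightarrow> real" where
  "Qnorm_sq A z = (A *v z) \<bullet> z"

end

theory Submission
  imports Defs
begin

text \<open>On stacked vectors the matrix Q gives the form
  q(y, g) = A |y|^2 + 2 C \<langle>y, g\<rangle> + D |g|^2 with A = (3 - 3 tau - 2 sigma) beta,
  C = 2 (1 - tau - sigma), D = (4 - tau - theta - 2 sigma) / beta. Completing the square,
  A q(y, g) = |A y + C g|^2 + (A D - C^2) |g|^2 and
  q(y, g) + 2 (sqrt (A D) - C) \<langle>y, g\<rangle> = |sqrt A y + sqrt D g|^2,
  so everything reduces to A > 0 and C^2 < A D. With u = 1 - tau - sigma,
  v = 2 - tau - theta - sigma, w = 1 + tau the defining inequality of R_sigma reads
  (u - v)^2 u < (u + sigma) w v, and C^2 < A D reads 4 u^2 < (3 u + sigma) (u + v + w);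
  the latter can only fail when u \<ge> 3 (v + w), and there the former forces sigma > 15 u.\<close>

lemma quadratic_form_pos:
  fixes y g :: "'a::real_inner"
  assumes "0 < A" and "C^2 < A * D" and "y \<noteq> 0 \<or> g \<noteq> 0"
  shows "0 < A * (y \<bullet> y) + 2 * C * (y \<bullet> g) + D * (g \<bullet> g)"
proof -
  have "A * (A * (y \<bullet> y) + 2 * C * (y \<bullet> g) + D * (g \<bullet> g))
      = (A *\<^sub>R y + C *\<^sub>R g) \<bullet> (A *\<^sub>R y + C *\<^sub>R g) + (A * D - C^2) * (g \<bullet> g)"
    by (simp add: inner_add_left inner_add_right inner_commute[of g y]
        power2_eq_square algebra_simps)
  moreover have "0 < (A *\<^sub>R y + C *\<^sub>R g) \<bullet> (A *\<^sub>R y + C *\<^sub>R g) + (A * D - C^2) * (g \<bullet> g)"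
  proof (cases "g = 0")
    case True
    with assms show ?thesis by simp
  next
    case False
    with assms show ?thesis
      by (simp add: add_nonneg_pos)
  qed
  ultimately show ?thesis
    using \<open>0 < A\<close> by (metis zero_less_mult_pos)
qed

lemma quadratic_form_lower_bound:
  fixes y g :: "'a::real_inner"
  assumes "0 \<le> A" and "0 \<le> D"
  shows "- 2 * (sqrt (A * D) - C) * (y \<bullet> g) \<le> A * (y \<bullet> y) + 2 * C * (y \<bullet> g) + D * (g \<bullet> g)"
proof -
  have sqrt_sq: "sqrt a * (sqrt a * t) = a * t" if "0 \<le> a" for a t :: real
    using that by (simp flip: mult.assoc)
  have "A * (y \<bullet> y) + 2 * C * (y \<bullet> g) + D * (g \<bullet> g) + 2 * (sqrt (A * D) - C) * (y \<bullet> g)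
      = (sqrt A *\<^sub>R y + sqrt D *\<^sub>R g) \<bullet> (sqrt A *\<^sub>R y + sqrt D *\<^sub>R g)"
    using assms by (simp add: inner_add_left inner_add_right inner_commute[of g y]
        real_sqrt_mult sqrt_sq algebra_simps)
  then show ?thesis
    using inner_ge_zero[of "sqrt A *\<^sub>R y + sqrt D *\<^sub>R g"] by linarith
qed

lemma region_inequality:
  fixes u v w s :: real
  assumes "0 < u" "0 < w" "0 \<le> s" and R: "(u - v)^2 * u < (u + s) * w * v"
  shows "0 < v" and "(2 * u)^2 < (3 * u + s) * (u + v + w)"
proof -
  show "0 < v"
  proof (rule ccontr)
    assume "\<not> 0 < v"
    then have "(u + s) * w * v \<le> 0"
      using assms by (simp add: mult_nonneg_nonpos)
    moreover have "0 \<le> (u - v)^2 * u"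
      using \<open>0 < u\<close> by simp
    ultimately show False
      using R by linarith
  qed
  define p where "p = v + w"
  show "(2 * u)^2 < (3 * u + s) * (u + v + w)"
  proof (cases "u < 3 * p")
    case True
    have "u * u < u * (3 * p)"
      using True \<open>0 < u\<close> by (rule mult_strict_left_mono)
    then have "(2 * u)^2 < 3 * u * (u + v + w)"
      by (simp add: p_def power2_eq_square algebra_simps)
    also have "\<dots> \<le> (3 * u + s) * (u + v + w)"
      using assms \<open>0 < v\<close> by (intro mult_right_mono) auto
    finally show ?thesis .
  next
    case False
    have "4 * w * v \<le> p^2"
      using sum_squares_ge_zero[of "v - w" 0]
      by (simp add: p_def power2_eq_square algebra_simps)
    have "(u + s) * (4 * w * v) \<le> (u + s) * p^2"
      using \<open>4 * w * v \<le> p^2\<close> assms by (intro mult_left_mono) auto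
    moreover have "(2 * p)^2 * u \<le> (u - v)^2 * u"
      using False \<open>0 < u\<close> \<open>0 < v\<close> \<open>0 < w\<close>
      by (intro mult_right_mono power_mono) (auto simp: p_def)
    ultimately have "16 * p^2 * u < (u + s) * p^2"
      using R by (simp add: algebra_simps power_mult_distrib)
    then have "15 * u < s"
      using \<open>0 < v\<close> \<open>0 < w\<close> by (simp add: p_def algebra_simps)
    then have "(2 * u)^2 < (3 * u + s) * u"
      using \<open>0 < u\<close> by (simp add: power2_eq_square)
    also have "\<dots> \<le> (3 * u + s) * (u + v + w)"
      using assms \<open>0 < v\<close> by (intro mult_left_mono) auto
    finally show ?thesis .
  qed
qed

lemma R_region_coefficients:
  fixes s tau theta :: real
  assumes "0 \<le> s" and "R_region s tau theta"
  shows "0 < 3 - 3 * tau - 2 * s" and "0 < 4 - tau - theta - 2 * s"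
    and "(2 * (1 - tau - s))^2 < (3 - 3 * tau - 2 * s) * (4 - tau - theta - 2 * s)"
proof -
  define u v w where "u = 1 - tau - s" and "v = 2 - tau - theta - s" and "w = 1 + tau"
  have "0 < u" "0 < w" and R: "0 < (1 - tau^2) * v - (1 - theta)^2 * u"
    using assms(2) unfolding R_region_def u_def v_def w_def by linarith+
  have "1 - tau^2 = (u + s) * w" and "(1 - theta)^2 = (u - v)^2"
    by (simp_all add: u_def v_def w_def power2_eq_square algebra_simps)
  with R have "(u - v)^2 * u < (u + s) * w * v"
    by simp
  from region_inequality[OF \<open>0 < u\<close> \<open>0 < w\<close> assms(1) this]
  have "0 < v" and ineq: "(2 * u)^2 < (3 * u + s) * (u + v + w)" .
  show "0 < 3 - 3 * tau - 2 * s" and "0 < 4 - tau - theta - 2 * s"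
    using \<open>0 < u\<close> \<open>0 < v\<close> \<open>0 < w\<close> assms(1) by (simp_all add: u_def v_def w_def)
  show "(2 * (1 - tau - s))^2 < (3 - 3 * tau - 2 * s) * (4 - tau - theta - 2 * s)"
    using ineq by (simp add: u_def v_def w_def algebra_simps)
qed

lemma sum_UNIV_Plus:
  "(\<Sum>k\<in>UNIV. f k) = (\<Sum>i\<in>UNIV. f (Inl i)) + (\<Sum>i\<in>UNIV. f (Inr i))"
  for f :: "'a::finite + 'b::finite \<Rightarrow> 'c::comm_monoid_add"
  by (simp add: UNIV_Plus_UNIV[symmetric] sum.Plus comp_def del: UNIV_Plus_UNIV)

lemma stack_nth_Inl [simp]: "stack y g $ Inl i = y $ i"
  and stack_nth_Inr [simp]: "stack y g $ Inr i = g $ i"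
  by (simp_all add: stack_def)

lemma ex_stack_eq: "\<exists>y g. x = stack y g"
  by (rule exI[of _ "\<chi> i. x $ Inl i"], rule exI[of _ "\<chi> i. x $ Inr i"])
    (simp add: vec_eq_iff split_sum_all)

lemma stack_eq_0_iff: "stack y g = 0 \<longleftrightarrow> y = 0 \<and> g = 0"
  by (auto simp: vec_eq_iff split_sum_all)

lemma inner_stack: "stack y g \<bullet> stack y' g' = y \<bullet> y' + g \<bullet> g'"
  by (simp add: inner_vec_def sum_UNIV_Plus)

lemma transpose_Qmat: "transpose (Qmat beta s tau theta) = Qmat beta s tau theta"
  by (simp add: vec_eq_iff transpose_def Qmat_def split_sum_all)

lemma Qmat_mult_stack:
  "Qmat beta s tau theta *v stack y g =
     stack (((3 - 3 * tau - 2 * s) * beta) *\<^sub>R y + (2 * (1 - tau - s)) *\<^sub>R g)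
           ((2 * (1 - tau - s)) *\<^sub>R y + ((4 - tau - theta - 2 * s) / beta) *\<^sub>R g)"
  by (simp add: vec_eq_iff split_sum_all matrix_vector_mult_def Qmat_def sum_UNIV_Plus
      if_distrib[of "\<lambda>c. c * _"] cong: if_cong)

lemma Qnorm_sq_Qmat_stack:
  "Qnorm_sq (Qmat beta s tau theta) (stack y g) =
     ((3 - 3 * tau - 2 * s) * beta) * (y \<bullet> y) + 2 * (2 * (1 - tau - s)) * (y \<bullet> g)
     + ((4 - tau - theta - 2 * s) / beta) * (g \<bullet> g)"
  by (simp add: Qnorm_sq_def Qmat_mult_stack inner_stack inner_add_left inner_commute[of g y])

lemma sym_pos_def_Qmat:
  assumes "0 < beta" and "0 < 3 - 3 * tau - 2 * s"
    and "(2 * (1 - tau - s))^2 < (3 - 3 * tau - 2 * s) * (4 - tau - theta - 2 * s)"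
  shows "sym_pos_def (Qmat beta s tau theta :: real^('m::finite + 'm)^('m + 'm))"
  unfolding sym_pos_def_def
proof (intro conjI allI impI transpose_Qmat)
  fix x :: "real^('m + 'm)"
  assume "x \<noteq> 0"
  obtain y g where x: "x = stack y g"
    using ex_stack_eq by blast
  with \<open>x \<noteq> 0\<close> have "y \<noteq> 0 \<or> g \<noteq> 0"
    by (simp add: stack_eq_0_iff)
  with assms have "0 < Qnorm_sq (Qmat beta s tau theta) x"
    unfolding x Qnorm_sq_Qmat_stack by (intro quadratic_form_pos) simp_all
  then show "0 < x \<bullet> (Qmat beta s tau theta *v x)"
    by (simp add: Qnorm_sq_def inner_commute)
qed

lemma vartheta_pos:
  assumes "(2 * (1 - tau - s))^2 < (3 - 3 * tau - 2 * s) * (4 - tau - theta - 2 * s)"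
  shows "0 < vartheta s tau theta"
  using real_less_rsqrt[OF assms] by (simp add: vartheta_def)

lemma Qnorm_sq_Qmat_stack_ge:
  assumes "0 < beta" and "0 \<le> 3 - 3 * tau - 2 * s" and "0 \<le> 4 - tau - theta - 2 * s"
  shows "- 2 * vartheta s tau theta * (y \<bullet> g) \<le> Qnorm_sq (Qmat beta s tau theta) (stack y g)"
  using quadratic_form_lower_bound[where A = "(3 - 3 * tau - 2 * s) * beta"
      and D = "(4 - tau - theta - 2 * s) / beta" and C = "2 * (1 - tau - s)"] assms
  by (simp add: Qnorm_sq_Qmat_stack vartheta_def)

theorem proposition2p5:
  fixes beta s tau theta :: real
  assumes "beta > 0" and "0 \<le> s" and "s < 1" and "R_region s tau theta"
  shows "sym_pos_def (Qmat beta s tau theta :: real^('m + 'm)^('m + 'm))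
         \<and> vartheta s tau theta > 0
         \<and> (\<forall>y g :: real^'m.
              Qnorm_sq (Qmat beta s tau theta) (stack y g)
                \<ge> - 2 * vartheta s tau theta * (y \<bullet> g))"
  using R_region_coefficients[OF assms(2,4)] assms(1)
  by (intro conjI allI sym_pos_def_Qmat vartheta_pos Qnorm_sq_Qmat_stack_ge) auto

end
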